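(* Suppose the kernel $k$ satisfies: for every $R>0$ there is $B_R$ with $\sup_{\|x\|\le R}\|\partial_{1,i}\partial_{1,j}k(x,\cdot)\|_{\mathcal H}\le B_R$ for all $i,j$. Let $R>0$, $\mathcal K=B(0,R)$, fix $\pi\in\mathcal P_2(\mathbb{R}^d)$ and $\lambda>0$. Then there exists $l_{\mathcal K}>0$ such that for all $\mu\in\mathcal P_2(\mathcal K)$ the map $\bm v_{\operatorname{MMD}}[\mu]$ is $l_{\mathcal K}$-Lipschitz on $\mathcal K$, and there exists $L_{\mathcal K}>0$ such that for all $\mu,\nu\in\mathcal P_2(\mathcal K)$, $\sup_{x\in\mathcal K}\|\bm v_{\operatorname{MMD}}[\mu](x)-\bm v_{\operatorname{MMD}}[\nu](x)\|\le L_{\mathcal K}W_2(\mu,\nu)$. The same two statements hold with $\bm v_{\operatorname{MMD}}[\mu]$ replaced by $\nabla f_{\mu,\pi}$.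
   Context: $k$ is a symmetric positive definite kernel on $\mathbb{R}^d$, sufficiently continuously differentiable, with RKHS $\mathcal H$; $\partial_{1,i}$ is the partial derivative in the $i$-th coordinate of the first argument, $\nabla_2$ the gradient in the second argument. $\mathcal P_2(\mathcal K)$ is the set of probability measures supported in $\mathcal K$; $W_2$ is the Wasserstein-2 distance. $\bm v_{\operatorname{MMD}}[\mu](y)=\int\nabla_2k(x,y)\,\mathrm d(\mu-\pi)(x)$. $m_\nu=\int k(x,\cdot)\mathrm d\nu(x)$; $S_\mu:\mathcal H\to\mathcal H$ satisfies $\langle f,S_\mu g\rangle_{\mathcal H}=\int\nabla f^\top\nabla g\,\mathrm d\mu$; $f_{\mu,\pi}=(S_\mu+\lambda\mathrm{Id})^{-1}(m_\mu-m_\pi)$. *)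

theory Defs
  imports "HOL-Analysis.Analysis" "HOL-Probability.Probability"
begin

text \<open>The RKHS H is modelled as an abstract (separable) real Hilbert space 'h together with a
  feature map Phi, k(x,y) = <Phi x, Phi y>, span of range Phi dense; elements f of H act as
  functions by f(x) = <f, Phi x> (reproducing property), and k(x,.) corresponds to Phi x.\<close>

definition kern :: "('a \<Rightarrow> 'h::real_inner) \<Rightarrow> 'a \<Rightarrow> 'a \<Rightarrow> real" where
  "kern Phi x y = inner (Phi x) (Phi y)"

definition ev :: "('a \<Rightarrow> 'h::real_inner) \<Rightarrow> 'h \<Rightarrow> 'a \<Rightarrow> real" where
  "ev Phi f x = inner f (Phi x)"

definition grad :: "('a::euclidean_space \<Rightarrow> real) \<Rightarrow> 'a \<Rightarrow> 'a" where
  "grad g x = (\<Sum>b\<in>Basis. frechet_derivative g (at x) b *\<^sub>R b)"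

definition P2 :: "'a::euclidean_space set \<Rightarrow> 'a measure set" where
  "P2 K = {\<mu>. prob_space \<mu> \<and> sets \<mu> = sets borel \<and> emeasure \<mu> K = 1
               \<and> integrable \<mu> (\<lambda>x. (norm x)\<^sup>2)}"

definition couplings :: "'a::euclidean_space measure \<Rightarrow> 'a measure \<Rightarrow> ('a \<times> 'a) measure set" where
  "couplings \<mu> \<nu> = {\<gamma>. prob_space \<gamma> \<and> sets \<gamma> = sets borel
                      \<and> distr \<gamma> borel fst = \<mu> \<and> distr \<gamma> borel snd = \<nu>}"

definition W2 :: "'a::euclidean_space measure \<Rightarrow> 'a measure \<Rightarrow> real" where
  "W2 \<mu> \<nu> = sqrt (enn2real (INF \<gamma>\<in>couplings \<mu> \<nu>.
                      \<integral>\<^sup>+ z. ennreal ((norm (fst z - snd z))\<^sup>2) \<partial>\<gamma>))"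

definition vMMD :: "('a::euclidean_space \<Rightarrow> 'h::real_inner) \<Rightarrow> 'a measure \<Rightarrow> 'a measure \<Rightarrow> 'a \<Rightarrow> 'a" where
  "vMMD Phi \<pi> \<mu> y = (\<integral>x. grad (kern Phi x) y \<partial>\<mu>) - (\<integral>x. grad (kern Phi x) y \<partial>\<pi>)"

definition kme :: "('a::euclidean_space \<Rightarrow> 'h::{real_inner,banach,second_countable_topology})
                     \<Rightarrow> 'a measure \<Rightarrow> 'h" where
  "kme Phi \<nu> = (\<integral>x. Phi x \<partial>\<nu>)"

definition Sop :: "('a::euclidean_space \<Rightarrow> 'h::real_inner) \<Rightarrow> 'a measure \<Rightarrow> 'h \<Rightarrow> 'h" where
  "Sop Phi \<mu> g = (THE h. \<forall>f. inner f h = (\<integral>x. grad (ev Phi f) x \<bullet> grad (ev Phi g) x \<partial>\<mu>))"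

definition fmp :: "('a::euclidean_space \<Rightarrow> 'h::{real_inner,banach,second_countable_topology})
                     \<Rightarrow> real \<Rightarrow> 'a measure \<Rightarrow> 'a measure \<Rightarrow> 'h" where
  "fmp Phi lam \<mu> \<pi> = inv (\<lambda>g. Sop Phi \<mu> g + lam *\<^sub>R g) (kme Phi \<mu> - kme Phi \<pi>)"

end

theory Submission
  imports Defs
begin

text \<open>Both vector fields have the form x \<mapsto> DPhi(x)^* g(\<mu>) with g(\<mu>) in H, because the
  gradient of x \<mapsto> <f, Phi x> is DPhi(x)^* f: for v_MMD, g(\<mu>) = m_\<mu> - m_\<pi>; for the gradient
  of f_\<mu>,\<pi>, g(\<mu>) = f_\<mu>,\<pi>. On a compact convex set DPhi is bounded and, D2Phi being
  continuous, Lipschitz; so such a field is Lipschitz in x with a constant proportional to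
  |g(\<mu>)|, and it changes between \<mu> and \<nu> by at most a constant times |g(\<mu>) - g(\<nu>)|.
  It therefore suffices that g(\<mu>) is bounded and W2-Lipschitz in \<mu>.
  For m_\<mu> this is the easy half of Kantorovich duality: integrating a Lipschitz function
  against any coupling and applying Cauchy-Schwarz gives |\<integral>a d\<mu> - \<integral>a d\<nu>| \<le> Lip(a) W2(\<mu>,\<nu>).
  For f_\<mu>,\<pi> = (S_\<mu> + \<lambda>)^-1 (m_\<mu> - m_\<pi>), the operator S_\<mu> g = \<integral>DPhi(x) DPhi(x)^* g d\<mu>(x) is
  bounded and monotone, so the resolvent exists (by a contraction argument) and has norm at
  most 1/\<lambda>; the integrand is Lipschitz in x, so S_\<mu> is W2-Lipschitz in \<mu>, and subtracting the
  resolvent equations for \<mu> and \<nu> bounds |f_\<mu>,\<pi> - f_\<nu>,\<pi>|.\<close>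

lemma compact_continuous_norm_bound:
  fixes f :: "'a::metric_space \<Rightarrow> 'b::real_normed_vector"
  assumes "continuous_on K f" "compact K"
  shows "\<exists>M>0. \<forall>x\<in>K. norm (f x) \<le> M"
  using compact_imp_bounded[OF compact_continuous_image[OF assms]] by (auto simp: bounded_pos)

lemma ex_lipschitz_bound_of_continuous_derivative:
  fixes f :: "'a::euclidean_space \<Rightarrow> 'b::real_normed_vector"
  assumes deriv: "\<And>x. (f has_derivative blinfun_apply (Df x)) (at x)"
    and cont: "continuous_on UNIV Df" and K: "compact K" "convex K"
  shows "\<exists>M>0. \<forall>x\<in>K. \<forall>y\<in>K. norm (f x - f y) \<le> M * norm (x - y)"
proof -
  obtain M where M: "M > 0" "\<forall>x\<in>K. norm (Df x) \<le> M"
    using compact_continuous_norm_bound[OF continuous_on_subset[OF cont] K(1)] by auto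
  have "norm (f x - f y) \<le> M * norm (x - y)" if "x \<in> K" "y \<in> K" for x y
  proof (rule differentiable_bound[OF K(2) _ _ that])
    show "(f has_derivative blinfun_apply (Df z)) (at z within K)" for z
      using deriv has_derivative_at_withinI by blast
    show "onorm (blinfun_apply (Df z)) \<le> M" if "z \<in> K" for z
      using M(2) that by (simp add: norm_blinfun.rep_eq[symmetric])
  qed
  with M(1) show ?thesis by blast
qed

section \<open>Adjoints of bounded linear maps on Euclidean spaces\<close>

lemma blinfun_euclidean_expansion:
  fixes A :: "'a::euclidean_space \<Rightarrow>\<^sub>L 'h::real_normed_vector"
  shows "A v = (\<Sum>b\<in>Basis. (v \<bullet> b) *\<^sub>R A b)"
proof -
  have "A v = A (\<Sum>b\<in>Basis. (v \<bullet> b) *\<^sub>R b)" by (simp add: euclidean_representation)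
  then show ?thesis by (simp add: blinfun.sum_right blinfun.scaleR_right)
qed

lemma adjoint_blinfun:
  fixes A :: "'a::euclidean_space \<Rightarrow>\<^sub>L 'h::real_inner"
  shows "adjoint (blinfun_apply A) = (\<lambda>f. \<Sum>b\<in>Basis. (f \<bullet> A b) *\<^sub>R b)"
proof (rule adjoint_unique, intro allI)
  fix v f
  show "A v \<bullet> f = v \<bullet> (\<Sum>b\<in>Basis. (f \<bullet> A b) *\<^sub>R b)"
    by (subst blinfun_euclidean_expansion[of A v])
      (simp add: inner_sum_left inner_sum_right inner_commute mult.commute)
qed

lemma inner_adjoint_blinfun:
  fixes A :: "'a::euclidean_space \<Rightarrow>\<^sub>L 'h::real_inner"
  shows "adjoint A f \<bullet> v = f \<bullet> A v"
  by (simp add: adjoint_blinfun blinfun_euclidean_expansion[of A v] inner_sum_left inner_sum_right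
      inner_commute mult.commute)

lemma adjoint_blinfun_diff_left:
  fixes A B :: "'a::euclidean_space \<Rightarrow>\<^sub>L 'h::real_inner"
  shows "adjoint A f - adjoint B f = adjoint (A - B) f"
  by (simp add: adjoint_blinfun blinfun.diff_left inner_diff_right scaleR_diff_left sum_subtractf)

lemma adjoint_blinfun_diff_right:
  fixes A :: "'a::euclidean_space \<Rightarrow>\<^sub>L 'h::real_inner"
  shows "adjoint A f - adjoint A g = adjoint A (f - g)"
  by (simp add: adjoint_blinfun inner_diff_left scaleR_diff_left sum_subtractf)

lemma norm_adjoint_blinfun_le:
  fixes A :: "'a::euclidean_space \<Rightarrow>\<^sub>L 'h::real_inner"
  shows "norm (adjoint A f) \<le> norm A * norm f"
proof -
  have "(norm (adjoint A f))\<^sup>2 = f \<bullet> A (adjoint A f)"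
    by (simp add: power2_norm_eq_inner inner_adjoint_blinfun)
  also have "\<dots> \<le> norm f * norm (A (adjoint A f))"
    by (rule order_trans[OF abs_ge_self Cauchy_Schwarz_ineq2])
  also have "\<dots> \<le> norm f * (norm A * norm (adjoint A f))"
    by (intro mult_left_mono norm_blinfun) simp
  finally have "norm (adjoint A f) * norm (adjoint A f) \<le> (norm A * norm f) * norm (adjoint A f)"
    by (simp add: power2_eq_square ac_simps)
  then show ?thesis
    by (cases "adjoint A f = 0") (auto simp: mult_le_cancel_right)
qed

lemma bounded_linear_adjoint_blinfun:
  fixes A :: "'a::euclidean_space \<Rightarrow>\<^sub>L 'h::real_inner"
  shows "bounded_linear (adjoint A)"
proof
  show "adjoint A (f + g) = adjoint A f + adjoint A g" "adjoint A (c *\<^sub>R f) = c *\<^sub>R adjoint A f"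
    for f g and c :: real
    by (simp_all add: adjoint_blinfun inner_add_left scaleR_add_left sum.distrib scaleR_sum_right)
  show "\<exists>K. \<forall>f. norm (adjoint A f) \<le> norm f * K"
    using norm_adjoint_blinfun_le[of A] by (metis mult.commute)
qed

lemma continuous_on_adjoint_blinfun:
  fixes A :: "'b::topological_space \<Rightarrow> 'a::euclidean_space \<Rightarrow>\<^sub>L 'h::real_inner"
  assumes "continuous_on S A" "continuous_on S f"
  shows "continuous_on S (\<lambda>x. adjoint (A x) (f x))"
  unfolding adjoint_blinfun by (intro continuous_intros blinfun.continuous_on assms)

section \<open>Monotone operators on a Hilbert space\<close>

lemma scaleR_norm_le_norm_add_scaleR:
  fixes u w :: "'h::real_inner"
  assumes "0 \<le> u \<bullet> w" "0 \<le> lam"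
  shows "lam * norm u \<le> norm (w + lam *\<^sub>R u)"
proof (cases "u = 0")
  case False
  have "lam * (norm u)\<^sup>2 \<le> u \<bullet> (w + lam *\<^sub>R u)"
    using assms(1) by (simp add: inner_add_right power2_norm_eq_inner)
  also have "\<dots> \<le> norm u * norm (w + lam *\<^sub>R u)"
    by (rule order_trans[OF abs_ge_self Cauchy_Schwarz_ineq2])
  finally show ?thesis using False by (simp add: power2_eq_square mult_le_cancel_left_pos ac_simps)
qed simp

lemma ex_solution_monotone_plus_scaleR:
  fixes S :: "'h::{real_inner,banach} \<Rightarrow> 'h"
  assumes diff: "\<And>u v. S (u - v) = S u - S v" and bounded: "\<And>u. norm (S u) \<le> C * norm u"
    and monotone: "\<And>u. 0 \<le> u \<bullet> S u" and lam: "lam > 0" and C: "C \<ge> 0"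
  shows "\<exists>u. S u + lam *\<^sub>R u = m"
proof -
  \<comment> \<open>Banach fixed point for u \<mapsto> u - t (T u - m): T is bounded by c and coercive with
    constant lam, so the step t = lam / c^2 gives the contraction constant k.\<close>
  define T where "T u = S u + lam *\<^sub>R u" for u
  define c where "c = C + lam"
  define t where "t = lam / c\<^sup>2"
  define k where "k = sqrt (1 - lam\<^sup>2 / c\<^sup>2)"
  have c: "c > 0" "lam \<le> c" using C lam by (auto simp: c_def)
  have t: "t > 0" using lam c by (simp add: t_def)
  have ratio: "0 < lam\<^sup>2 / c\<^sup>2" "lam\<^sup>2 / c\<^sup>2 \<le> 1"
    using c lam by (auto simp: divide_le_eq_1 power_mono)
  have k: "0 \<le> k" "k < 1" using ratio by (auto simp: k_def)
  have T_diff: "T (u - v) = T u - T v" for u v by (simp add: T_def diff scaleR_diff_right)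
  have T_bounded: "norm (T w) \<le> c * norm w" for w
    using norm_triangle_ineq[of "S w" "lam *\<^sub>R w"] bounded[of w] lam
    by (simp add: T_def c_def algebra_simps)
  have T_coercive: "lam * (norm w)\<^sup>2 \<le> w \<bullet> T w" for w
    using monotone[of w] by (simp add: T_def inner_add_right power2_norm_eq_inner)
  have contraction: "norm (w - t *\<^sub>R T w) \<le> k * norm w" for w
  proof -
    have "(w - t *\<^sub>R T w) \<bullet> (w - t *\<^sub>R T w)
        = w \<bullet> w - t * (w \<bullet> T w) - t * (T w \<bullet> w) + t * t * (T w \<bullet> T w)"
      by (simp add: inner_diff_left inner_diff_right algebra_simps)
    then have "(norm (w - t *\<^sub>R T w))\<^sup>2 = (norm w)\<^sup>2 - 2 * t * (w \<bullet> T w) + t\<^sup>2 * (norm (T w))\<^sup>2"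
      unfolding power2_norm_eq_inner by (simp add: inner_commute[of "T w" w] power2_eq_square)
    moreover have "2 * t * (lam * (norm w)\<^sup>2) \<le> 2 * t * (w \<bullet> T w)"
      using T_coercive[of w] t by simp
    moreover have "t\<^sup>2 * (norm (T w))\<^sup>2 \<le> t\<^sup>2 * (c * norm w)\<^sup>2"
      using T_bounded[of w] by (simp add: mult_left_mono power_mono)
    ultimately have "(norm (w - t *\<^sub>R T w))\<^sup>2
        \<le> (norm w)\<^sup>2 - 2 * t * (lam * (norm w)\<^sup>2) + t\<^sup>2 * (c * norm w)\<^sup>2"
      by linarith
    also have "\<dots> = (1 - lam\<^sup>2 / c\<^sup>2) * (norm w)\<^sup>2"
      using c by (simp add: t_def field_simps power2_eq_square)
    also have "\<dots> = (k * norm w)\<^sup>2"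
      using ratio by (simp add: k_def power_mult_distrib)
    finally show ?thesis by (rule power2_le_imp_le) (use k in simp)
  qed
  define F where "F u = u - t *\<^sub>R (T u - m)" for u
  have "F u - F v = (u - v) - t *\<^sub>R T (u - v)" for u v
    by (simp add: F_def T_diff algebra_simps)
  then have "\<forall>u v. dist (F u) (F v) \<le> k * dist u v"
    using contraction by (simp add: dist_norm)
  then obtain u where "F u = u"
    using banach_fix_type[OF k] by blast
  then have "T u = m" using t by (simp add: F_def)
  then show ?thesis unfolding T_def by blast
qed

section \<open>Measures supported in a compact set and the Wasserstein distance\<close>

lemma AE_in_P2:
  assumes "\<mu> \<in> P2 K" "closed K"
  shows "AE x in \<mu>. x \<in> K"
proof -
  have "prob_space \<mu>" "measure \<mu> K = 1" using assms by (simp_all add: P2_def measure_def)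
  then show ?thesis using prob_space.AE_prob_1 by blast
qed

lemma integrable_P2_continuous:
  fixes a :: "'a::euclidean_space \<Rightarrow> 'b::{banach,second_countable_topology}"
  assumes "\<mu> \<in> P2 K" "compact K" "continuous_on UNIV a"
  shows "integrable \<mu> a"
proof -
  have "prob_space \<mu>" and sets: "sets \<mu> = sets borel" using assms by (auto simp: P2_def)
  then interpret prob_space \<mu> by simp
  obtain B where B: "\<forall>x\<in>K. norm (a x) \<le> B"
    using compact_continuous_norm_bound[OF continuous_on_subset[OF assms(3)] assms(2)] by auto
  have "AE x in \<mu>. norm (a x) \<le> B"
    using AE_in_P2[OF assms(1) compact_imp_closed[OF assms(2)]] by eventually_elim (use B in auto)
  moreover have "a \<in> borel_measurable \<mu>"
    using borel_measurable_continuous_onI[OF assms(3)] measurable_cong_sets[OF sets refl] by blast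
  ultimately show ?thesis by (rule integrable_const_bound)
qed

lemma norm_integral_P2_le:
  fixes a :: "'a::euclidean_space \<Rightarrow> 'b::{banach,second_countable_topology}"
  assumes "\<mu> \<in> P2 K" "closed K" "integrable \<mu> a" "\<forall>x\<in>K. norm (a x) \<le> B"
  shows "norm (integral\<^sup>L \<mu> a) \<le> B"
proof -
  interpret prob_space \<mu> using assms(1) by (simp add: P2_def)
  have "norm (integral\<^sup>L \<mu> a) \<le> (\<integral>x. norm (a x) \<partial>\<mu>)" by (rule integral_norm_bound)
  also have "\<dots> \<le> (\<integral>x. B \<partial>\<mu>)"
    using AE_in_P2[OF assms(1,2)] assms(3,4) by (intro integral_mono_AE) (auto elim!: AE_mp)
  finally show ?thesis by (simp add: prob_space)
qed

definition quadratic_cost :: "('a::euclidean_space \<times> 'a) measure \<Rightarrow> ennreal" where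
  "quadratic_cost \<gamma> = (\<integral>\<^sup>+ z. ennreal ((norm (fst z - snd z))\<^sup>2) \<partial>\<gamma>)"

lemma W2_eq_INF_quadratic_cost:
  "W2 \<mu> \<nu> = sqrt (enn2real (INF \<gamma>\<in>couplings \<mu> \<nu>. quadratic_cost \<gamma>))"
  by (simp add: W2_def quadratic_cost_def)

lemma W2_nonneg: "W2 \<mu> \<nu> \<ge> 0"
  by (simp add: W2_def)

lemma
  assumes "\<gamma> \<in> couplings \<mu> \<nu>"
  shows prob_space_coupling: "prob_space \<gamma>"
    and measurable_fst_coupling: "fst \<in> borel_measurable \<gamma>"
    and measurable_snd_coupling: "snd \<in> borel_measurable \<gamma>"
    and distr_fst_coupling: "distr \<gamma> borel fst = \<mu>"
    and distr_snd_coupling: "distr \<gamma> borel snd = \<nu>"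
proof -
  have sets: "sets \<gamma> = sets borel" using assms by (simp add: couplings_def)
  show "fst \<in> borel_measurable \<gamma>" "snd \<in> borel_measurable \<gamma>"
    using borel_measurable_continuous_onI[OF continuous_on_fst[OF continuous_on_id]]
      borel_measurable_continuous_onI[OF continuous_on_snd[OF continuous_on_id]]
      measurable_cong_sets[OF sets refl] by blast+
  show "prob_space \<gamma>" "distr \<gamma> borel fst = \<mu>" "distr \<gamma> borel snd = \<nu>"
    using assms by (auto simp: couplings_def)
qed

lemma AE_coupling_in_P2:
  assumes "\<gamma> \<in> couplings \<mu> \<nu>" "\<mu> \<in> P2 K" "\<nu> \<in> P2 K" "closed K"
  shows "AE z in \<gamma>. fst z \<in> K \<and> snd z \<in> K"
proof -
  have "AE x in distr \<gamma> borel fst. x \<in> K"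
    unfolding distr_fst_coupling[OF assms(1)] by (rule AE_in_P2[OF assms(2,4)])
  moreover have "AE x in distr \<gamma> borel snd. x \<in> K"
    unfolding distr_snd_coupling[OF assms(1)] by (rule AE_in_P2[OF assms(3,4)])
  ultimately have "AE z in \<gamma>. fst z \<in> K" "AE z in \<gamma>. snd z \<in> K"
    using AE_distr_iff[OF measurable_fst_coupling[OF assms(1)], of "\<lambda>x. x \<in> K"]
      AE_distr_iff[OF measurable_snd_coupling[OF assms(1)], of "\<lambda>x. x \<in> K"] assms(4)
    by auto
  then show ?thesis by eventually_elim simp
qed

lemma (in prob_space) distr_pair_snd: "distr (N \<Otimes>\<^sub>M M) M snd = M" if "prob_space N"
proof (intro measure_eqI)
  fix A assume A: "A \<in> sets (distr (N \<Otimes>\<^sub>M M) M snd)"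
  then have "emeasure (distr (N \<Otimes>\<^sub>M M) M snd) A = emeasure (N \<Otimes>\<^sub>M M) (space N \<times> A)"
    by (auto simp: emeasure_distr space_pair_measure dest: sets.sets_into_space
        intro!: arg_cong2[where f=emeasure])
  with A that show "emeasure (distr (N \<Otimes>\<^sub>M M) M snd) A = emeasure M A"
    by (simp add: emeasure_pair_measure_Times prob_space.emeasure_space_1)
qed simp

lemma pair_measure_in_couplings:
  assumes "\<mu> \<in> P2 K" "\<nu> \<in> P2 K"
  shows "\<mu> \<Otimes>\<^sub>M \<nu> \<in> couplings \<mu> \<nu>"
proof -
  have ps: "prob_space \<mu>" "prob_space \<nu>" and sets: "sets \<mu> = sets borel" "sets \<nu> = sets borel"
    using assms by (auto simp: P2_def)
  have "distr (\<mu> \<Otimes>\<^sub>M \<nu>) borel fst = distr (\<mu> \<Otimes>\<^sub>M \<nu>) \<mu> fst"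
    using sets by (intro distr_cong) (auto dest: sets_eq_imp_space_eq)
  also have "\<dots> = \<mu>" by (rule prob_space.distr_pair_fst[OF ps(2)])
  finally have fst: "distr (\<mu> \<Otimes>\<^sub>M \<nu>) borel fst = \<mu>" .
  have "distr (\<mu> \<Otimes>\<^sub>M \<nu>) borel snd = distr (\<mu> \<Otimes>\<^sub>M \<nu>) \<nu> snd"
    using sets by (intro distr_cong) (auto dest: sets_eq_imp_space_eq)
  also have "\<dots> = \<nu>" by (rule prob_space.distr_pair_snd[OF ps(2,1)])
  finally have snd: "distr (\<mu> \<Otimes>\<^sub>M \<nu>) borel snd = \<nu>" .
  have "sets (\<mu> \<Otimes>\<^sub>M \<nu>) = sets borel"
    using sets_pair_measure_cong[OF sets] borel_prod by metis
  with fst snd ps show ?thesis by (simp add: couplings_def prob_space_pair)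
qed

lemma INF_quadratic_cost_finite:
  assumes "\<mu> \<in> P2 K" "\<nu> \<in> P2 K" "compact K"
  shows "(INF \<gamma>\<in>couplings \<mu> \<nu>. quadratic_cost \<gamma>) < \<infinity>"
proof -
  let ?\<gamma> = "\<mu> \<Otimes>\<^sub>M \<nu>"
  have \<gamma>: "?\<gamma> \<in> couplings \<mu> \<nu>" by (rule pair_measure_in_couplings[OF assms(1,2)])
  interpret prob_space ?\<gamma> by (rule prob_space_coupling[OF \<gamma>])
  obtain r where r: "\<forall>x\<in>K. norm x \<le> r" using compact_imp_bounded[OF assms(3)] by (auto simp: bounded_iff)
  have "quadratic_cost ?\<gamma> \<le> (\<integral>\<^sup>+ z. ennreal ((2 * r)\<^sup>2) \<partial>?\<gamma>)"
    unfolding quadratic_cost_def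
  proof (rule nn_integral_mono_AE)
    show "AE z in ?\<gamma>. ennreal ((norm (fst z - snd z))\<^sup>2) \<le> ennreal ((2 * r)\<^sup>2)"
      using AE_coupling_in_P2[OF \<gamma> assms(1,2) compact_imp_closed[OF assms(3)]]
    proof eventually_elim
      case (elim z)
      then have "norm (fst z) \<le> r" "norm (snd z) \<le> r" using r by auto
      then have "norm (fst z - snd z) \<le> 2 * r"
        using norm_triangle_ineq4[of "fst z" "snd z"] by linarith
      then show ?case by (intro ennreal_leI power_mono) auto
    qed
  qed
  also have "\<dots> < \<infinity>" by (simp add: emeasure_space_1)
  finally show ?thesis using INF_lower[OF \<gamma>, of quadratic_cost] by (meson order.strict_trans1)
qed

lemma nn_integral_dist_coupling_le:
  fixes a :: "'a::euclidean_space \<Rightarrow> 'b::{banach,second_countable_topology}"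
  assumes \<gamma>: "\<gamma> \<in> couplings \<mu> \<nu>" and \<mu>: "\<mu> \<in> P2 K" and \<nu>: "\<nu> \<in> P2 K" and K: "compact K"
    and cont: "continuous_on UNIV a" and lip: "\<forall>x\<in>K. \<forall>y\<in>K. norm (a x - a y) \<le> L * norm (x - y)"
    and L: "L \<ge> 0"
  shows "ennreal (norm (integral\<^sup>L \<mu> a - integral\<^sup>L \<nu> a))
           \<le> ennreal L * (\<integral>\<^sup>+ z. ennreal (norm (fst z - snd z)) \<partial>\<gamma>)"
proof -
  interpret prob_space \<gamma> by (rule prob_space_coupling[OF \<gamma>])
  note [measurable] = measurable_fst_coupling[OF \<gamma>] measurable_snd_coupling[OF \<gamma>]
  have a [measurable]: "a \<in> borel_measurable borel" by (rule borel_measurable_continuous_onI[OF cont])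
  have "integrable \<mu> a" "integrable \<nu> a"
    using integrable_P2_continuous[OF _ K cont] \<mu> \<nu> by auto
  then have int: "integrable \<gamma> (\<lambda>z. a (fst z))" "integrable \<gamma> (\<lambda>z. a (snd z))"
    unfolding distr_fst_coupling[OF \<gamma>, symmetric] distr_snd_coupling[OF \<gamma>, symmetric]
    by (simp_all add: integrable_distr_eq[OF measurable_fst_coupling[OF \<gamma>] a]
        integrable_distr_eq[OF measurable_snd_coupling[OF \<gamma>] a])
  have "integral\<^sup>L \<mu> a - integral\<^sup>L \<nu> a = (\<integral>z. a (fst z) \<partial>\<gamma>) - (\<integral>z. a (snd z) \<partial>\<gamma>)"
    unfolding distr_fst_coupling[OF \<gamma>, symmetric] distr_snd_coupling[OF \<gamma>, symmetric]
    by (simp add: integral_distr[OF measurable_fst_coupling[OF \<gamma>] a]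
        integral_distr[OF measurable_snd_coupling[OF \<gamma>] a])
  also have "\<dots> = (\<integral>z. a (fst z) - a (snd z) \<partial>\<gamma>)" by (rule Bochner_Integration.integral_diff[OF int, symmetric])
  finally have "ennreal (norm (integral\<^sup>L \<mu> a - integral\<^sup>L \<nu> a))
      \<le> (\<integral>\<^sup>+ z. norm (a (fst z) - a (snd z)) \<partial>\<gamma>)"
    using integral_norm_bound_ennreal[OF Bochner_Integration.integrable_diff[OF int]] by simp
  also have "\<dots> \<le> (\<integral>\<^sup>+ z. ennreal L * ennreal (norm (fst z - snd z)) \<partial>\<gamma>)"
    using AE_coupling_in_P2[OF \<gamma> \<mu> \<nu> compact_imp_closed[OF K]]
    by (intro nn_integral_mono_AE) (auto elim!: AE_mp simp: lip L ennreal_mult[symmetric])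
  also have "\<dots> = ennreal L * (\<integral>\<^sup>+ z. ennreal (norm (fst z - snd z)) \<partial>\<gamma>)"
    by (rule nn_integral_cmult) measurable
  finally show ?thesis .
qed

lemma nn_integral_dist_le_quadratic_cost:
  assumes "\<gamma> \<in> couplings \<mu> \<nu>"
  shows "(\<integral>\<^sup>+ z. ennreal (norm (fst z - snd z)) \<partial>\<gamma>)\<^sup>2 \<le> quadratic_cost \<gamma>"
proof -
  interpret prob_space \<gamma> by (rule prob_space_coupling[OF assms])
  note [measurable] = measurable_fst_coupling[OF assms] measurable_snd_coupling[OF assms]
  have "(\<integral>\<^sup>+ z. ennreal (norm (fst z - snd z)) * 1 \<partial>\<gamma>)\<^sup>2
      \<le> (\<integral>\<^sup>+ z. (ennreal (norm (fst z - snd z)))\<^sup>2 \<partial>\<gamma>) * (\<integral>\<^sup>+ z. 1 ^ 2 \<partial>\<gamma>)"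
    by (intro Cauchy_Schwarz_nn_integral) measurable
  then show ?thesis by (simp add: quadratic_cost_def emeasure_space_1 ennreal_power)
qed

lemma norm_integral_diff_le_W2:
  fixes a :: "'a::euclidean_space \<Rightarrow> 'b::{banach,second_countable_topology}"
  assumes \<mu>: "\<mu> \<in> P2 K" and \<nu>: "\<nu> \<in> P2 K" and K: "compact K"
    and cont: "continuous_on UNIV a" and lip: "\<forall>x\<in>K. \<forall>y\<in>K. norm (a x - a y) \<le> L * norm (x - y)"
    and L: "L > 0"
  shows "norm (integral\<^sup>L \<mu> a - integral\<^sup>L \<nu> a) \<le> L * W2 \<mu> \<nu>"
proof -
  define D where "D = norm (integral\<^sup>L \<mu> a - integral\<^sup>L \<nu> a)"
  define I where "I = (INF \<gamma>\<in>couplings \<mu> \<nu>. quadratic_cost \<gamma>)"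
  have "ennreal ((D / L)\<^sup>2) \<le> quadratic_cost \<gamma>" if \<gamma>: "\<gamma> \<in> couplings \<mu> \<nu>" for \<gamma>
  proof -
    let ?E = "\<integral>\<^sup>+ z. ennreal (norm (fst z - snd z)) \<partial>\<gamma>"
    have "ennreal L * ennreal (D / L) \<le> ennreal L * ?E"
      using nn_integral_dist_coupling_le[OF \<gamma> \<mu> \<nu> K cont lip] L
      by (simp add: D_def ennreal_mult[symmetric])
    then have "ennreal (D / L) \<le> ?E" using L by (simp add: ennreal_mult_le_mult_iff)
    then have "ennreal (D / L) ^ 2 \<le> ?E ^ 2" by (rule power_mono) simp
    also have "\<dots> \<le> quadratic_cost \<gamma>" by (rule nn_integral_dist_le_quadratic_cost[OF \<gamma>])
    finally show ?thesis using L by (simp add: ennreal_power D_def)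
  qed
  then have "ennreal ((D / L)\<^sup>2) \<le> I" unfolding I_def by (rule INF_greatest)
  then have "(D / L)\<^sup>2 \<le> enn2real I"
    using INF_quadratic_cost_finite[OF \<mu> \<nu> K] enn2real_mono unfolding I_def by fastforce
  then have "D / L \<le> W2 \<mu> \<nu>"
    unfolding W2_eq_INF_quadratic_cost I_def[symmetric] using L real_le_rsqrt by (simp add: D_def)
  then show ?thesis using L by (simp add: D_def field_simps)
qed

section \<open>Twice differentiable feature maps\<close>

locale C2_feature_map =
  fixes Phi :: "'a::euclidean_space \<Rightarrow> 'h::{real_inner,banach,second_countable_topology}"
    and DPhi :: "'a \<Rightarrow> ('a \<Rightarrow>\<^sub>L 'h)"
    and D2Phi :: "'a \<Rightarrow> ('a \<Rightarrow>\<^sub>L ('a \<Rightarrow>\<^sub>L 'h))"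
  assumes has_derivative_Phi: "\<And>x. (Phi has_derivative blinfun_apply (DPhi x)) (at x)"
    and has_derivative_DPhi: "\<And>x. (DPhi has_derivative blinfun_apply (D2Phi x)) (at x)"
    and continuous_on_D2Phi: "continuous_on UNIV D2Phi"
begin

lemma continuous_on_Phi: "continuous_on UNIV Phi"
  using has_derivative_Phi has_derivative_continuous continuous_at_imp_continuous_on by blast

lemma continuous_on_DPhi: "continuous_on UNIV DPhi"
  using has_derivative_DPhi has_derivative_continuous continuous_at_imp_continuous_on by blast

lemma grad_ev_eq: "grad (ev Phi f) = (\<lambda>x. adjoint (DPhi x) f)"
proof
  fix x
  have "(ev Phi f has_derivative (\<lambda>v. f \<bullet> DPhi x v)) (at x)"
    unfolding ev_def[abs_def] using has_derivative_Phi[of x] by (auto intro!: derivative_eq_intros)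
  then show "grad (ev Phi f) x = adjoint (DPhi x) f"
    by (simp add: grad_def adjoint_blinfun frechet_derivative_at[symmetric])
qed

lemma vMMD_eq:
  assumes "integrable \<mu> Phi" "integrable \<pi> Phi"
  shows "vMMD Phi \<pi> \<mu> = (\<lambda>y. adjoint (DPhi y) (kme Phi \<mu> - kme Phi \<pi>))"
proof -
  have "(\<integral>x. grad (kern Phi x) y \<partial>m) = adjoint (DPhi y) (kme Phi m)" if "integrable m Phi" for m y
  proof -
    have "kern Phi x = ev Phi (Phi x)" for x by (simp add: kern_def ev_def fun_eq_iff)
    then have "(\<integral>x. grad (kern Phi x) y \<partial>m) = (\<integral>x. adjoint (DPhi y) (Phi x) \<partial>m)"
      by (simp add: grad_ev_eq)
    also have "\<dots> = adjoint (DPhi y) (kme Phi m)"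
      unfolding kme_def by (rule integral_bounded_linear[OF bounded_linear_adjoint_blinfun that])
    finally show ?thesis .
  qed
  then show ?thesis
    using assms by (simp add: vMMD_def adjoint_blinfun_diff_right fun_eq_iff)
qed

lemma ex_norm_DPhi_bound:
  assumes "compact K"
  shows "\<exists>M>0. \<forall>x\<in>K. norm (DPhi x) \<le> M"
  using compact_continuous_norm_bound[OF continuous_on_subset[OF continuous_on_DPhi] assms] by auto

lemma lipschitz_and_W2_bounds_adjoint_DPhi:
  assumes K: "compact K" "convex K"
    and bounded: "\<forall>\<mu>\<in>P. norm (g \<mu>) \<le> B"
    and W2_lip: "\<forall>\<mu>\<in>P. \<forall>\<nu>\<in>P. norm (g \<mu> - g \<nu>) \<le> L * W2 \<mu> \<nu>"
  shows "(\<exists>l>0. \<forall>\<mu>\<in>P. l-lipschitz_on K (\<lambda>x. adjoint (DPhi x) (g \<mu>)))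
    \<and> (\<exists>L'>0. \<forall>\<mu>\<in>P. \<forall>\<nu>\<in>P. \<forall>x\<in>K.
          norm (adjoint (DPhi x) (g \<mu>) - adjoint (DPhi x) (g \<nu>)) \<le> L' * W2 \<mu> \<nu>)"
proof (intro conjI)
  obtain M1 where M1: "M1 > 0" "\<forall>x\<in>K. norm (DPhi x) \<le> M1"
    using ex_norm_DPhi_bound[OF K(1)] by blast
  obtain M2 where M2: "M2 > 0" "\<forall>x\<in>K. \<forall>y\<in>K. norm (DPhi x - DPhi y) \<le> M2 * norm (x - y)"
    using ex_lipschitz_bound_of_continuous_derivative[OF has_derivative_DPhi continuous_on_D2Phi K]
    by blast
  show "\<exists>l>0. \<forall>\<mu>\<in>P. l-lipschitz_on K (\<lambda>x. adjoint (DPhi x) (g \<mu>))"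
  proof (intro exI[of _ "M2 * \<bar>B\<bar> + 1"] conjI ballI lipschitz_onI)
    fix \<mu> x y assume \<mu>: "\<mu> \<in> P" and xy: "x \<in> K" "y \<in> K"
    have "dist (adjoint (DPhi x) (g \<mu>)) (adjoint (DPhi y) (g \<mu>))
        \<le> norm (DPhi x - DPhi y) * norm (g \<mu>)"
      by (simp add: dist_norm adjoint_blinfun_diff_left norm_adjoint_blinfun_le)
    also have "\<dots> \<le> (M2 * norm (x - y)) * \<bar>B\<bar>"
      using M2 xy bounded \<mu> by (intro mult_mono) auto
    also have "\<dots> \<le> (M2 * \<bar>B\<bar> + 1) * dist x y"
      by (simp add: dist_norm algebra_simps)
    finally show "dist (adjoint (DPhi x) (g \<mu>)) (adjoint (DPhi y) (g \<mu>)) \<le> (M2 * \<bar>B\<bar> + 1) * dist x y" .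
  qed (use M2 in \<open>auto intro: add_nonneg_pos\<close>)
  show "\<exists>L'>0. \<forall>\<mu>\<in>P. \<forall>\<nu>\<in>P. \<forall>x\<in>K.
          norm (adjoint (DPhi x) (g \<mu>) - adjoint (DPhi x) (g \<nu>)) \<le> L' * W2 \<mu> \<nu>"
  proof (intro exI[of _ "M1 * \<bar>L\<bar> + 1"] conjI ballI)
    fix \<mu> \<nu> x assume \<mu>: "\<mu> \<in> P" and \<nu>: "\<nu> \<in> P" and x: "x \<in> K"
    have "norm (adjoint (DPhi x) (g \<mu>) - adjoint (DPhi x) (g \<nu>)) \<le> norm (DPhi x) * norm (g \<mu> - g \<nu>)"
      by (simp add: adjoint_blinfun_diff_right norm_adjoint_blinfun_le)
    also have "\<dots> \<le> M1 * (\<bar>L\<bar> * W2 \<mu> \<nu>)"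
    proof (rule mult_mono)
      show "norm (g \<mu> - g \<nu>) \<le> \<bar>L\<bar> * W2 \<mu> \<nu>"
        using W2_lip \<mu> \<nu> mult_right_mono[OF abs_ge_self W2_nonneg, of L \<mu> \<nu>] by fastforce
    qed (use M1 x in auto)
    also have "\<dots> \<le> (M1 * \<bar>L\<bar> + 1) * W2 \<mu> \<nu>"
      using W2_nonneg[of \<mu> \<nu>] by (simp add: algebra_simps)
    finally show "norm (adjoint (DPhi x) (g \<mu>) - adjoint (DPhi x) (g \<nu>)) \<le> (M1 * \<bar>L\<bar> + 1) * W2 \<mu> \<nu>" .
  qed (use M1 in \<open>auto intro: add_nonneg_pos\<close>)
qed

lemma integrable_Phi_P2:
  assumes "\<mu> \<in> P2 K" "compact K"
  shows "integrable \<mu> Phi"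
  by (rule integrable_P2_continuous[OF assms continuous_on_Phi])

lemma ex_norm_kme_P2_bound:
  assumes "compact K"
  shows "\<exists>M. \<forall>\<mu>\<in>P2 K. norm (kme Phi \<mu>) \<le> M"
proof -
  obtain M where M: "\<forall>x\<in>K. norm (Phi x) \<le> M"
    using compact_continuous_norm_bound[OF continuous_on_subset[OF continuous_on_Phi] assms] by auto
  have "norm (kme Phi \<mu>) \<le> M" if "\<mu> \<in> P2 K" for \<mu>
    unfolding kme_def
    by (rule norm_integral_P2_le[OF that compact_imp_closed[OF assms] integrable_Phi_P2[OF that assms] M])
  then show ?thesis by blast
qed

lemma kme_W2_lipschitz:
  assumes "compact K" "convex K"
  shows "\<exists>L>0. \<forall>\<mu>\<in>P2 K. \<forall>\<nu>\<in>P2 K. norm (kme Phi \<mu> - kme Phi \<nu>) \<le> L * W2 \<mu> \<nu>"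
proof -
  obtain L where L: "L > 0" "\<forall>x\<in>K. \<forall>y\<in>K. norm (Phi x - Phi y) \<le> L * norm (x - y)"
    using ex_lipschitz_bound_of_continuous_derivative[OF has_derivative_Phi continuous_on_DPhi assms]
    by blast
  have "norm (kme Phi \<mu> - kme Phi \<nu>) \<le> L * W2 \<mu> \<nu>" if "\<mu> \<in> P2 K" "\<nu> \<in> P2 K" for \<mu> \<nu>
    unfolding kme_def by (rule norm_integral_diff_le_W2[OF that assms(1) continuous_on_Phi L(2,1)])
  with L(1) show ?thesis by blast
qed

lemma continuous_on_DPhi_adjoint_DPhi: "continuous_on UNIV (\<lambda>x. DPhi x (adjoint (DPhi x) g))"
  by (intro blinfun.continuous_on continuous_on_DPhi continuous_on_adjoint_blinfun continuous_on_const)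

lemma Sop_eq_integral:
  assumes "\<mu> \<in> P2 K" "compact K"
  shows "Sop Phi \<mu> g = (\<integral>x. DPhi x (adjoint (DPhi x) g) \<partial>\<mu>)"
proof -
  let ?h = "\<integral>x. DPhi x (adjoint (DPhi x) g) \<partial>\<mu>"
  have int: "integrable \<mu> (\<lambda>x. DPhi x (adjoint (DPhi x) g))"
    by (rule integrable_P2_continuous[OF assms continuous_on_DPhi_adjoint_DPhi])
  have h: "f \<bullet> ?h = (\<integral>x. grad (ev Phi f) x \<bullet> grad (ev Phi g) x \<partial>\<mu>)" for f
  proof -
    have "f \<bullet> ?h = (\<integral>x. f \<bullet> DPhi x (adjoint (DPhi x) g) \<partial>\<mu>)"
      by (rule integral_bounded_linear[OF bounded_linear_inner_right int, symmetric])
    then show ?thesis by (simp add: grad_ev_eq inner_adjoint_blinfun)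
  qed
  show ?thesis unfolding Sop_def
  proof (rule the_equality)
    fix h' assume "\<forall>f. f \<bullet> h' = (\<integral>x. grad (ev Phi f) x \<bullet> grad (ev Phi g) x \<partial>\<mu>)"
    then have "(h' - ?h) \<bullet> (h' - ?h) = 0"
      using h[of "h' - ?h"] by (simp add: inner_diff_right)
    then show "h' = ?h" by simp
  qed (use h in blast)
qed

lemma Sop_diff:
  assumes "\<mu> \<in> P2 K" "compact K"
  shows "Sop Phi \<mu> (u - v) = Sop Phi \<mu> u - Sop Phi \<mu> v"
proof -
  have int: "integrable \<mu> (\<lambda>x. DPhi x (adjoint (DPhi x) g))" for g
    by (rule integrable_P2_continuous[OF assms continuous_on_DPhi_adjoint_DPhi])
  have "Sop Phi \<mu> u - Sop Phi \<mu> v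
      = (\<integral>x. DPhi x (adjoint (DPhi x) u) - DPhi x (adjoint (DPhi x) v) \<partial>\<mu>)"
    unfolding Sop_eq_integral[OF assms] by (rule Bochner_Integration.integral_diff[OF int int, symmetric])
  also have "\<dots> = Sop Phi \<mu> (u - v)"
    unfolding Sop_eq_integral[OF assms]
    by (simp only: blinfun.diff_right[symmetric] adjoint_blinfun_diff_right)
  finally show ?thesis by simp
qed

lemma inner_Sop_nonneg:
  assumes "\<mu> \<in> P2 K" "compact K"
  shows "0 \<le> u \<bullet> Sop Phi \<mu> u"
proof -
  have "u \<bullet> Sop Phi \<mu> u = (\<integral>x. u \<bullet> DPhi x (adjoint (DPhi x) u) \<partial>\<mu>)"
    unfolding Sop_eq_integral[OF assms]
    by (rule integral_bounded_linear[OF bounded_linear_inner_right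
          integrable_P2_continuous[OF assms continuous_on_DPhi_adjoint_DPhi], symmetric])
  also have "\<dots> = (\<integral>x. (norm (adjoint (DPhi x) u))\<^sup>2 \<partial>\<mu>)"
    by (simp add: inner_adjoint_blinfun power2_norm_eq_inner)
  finally show ?thesis by simp
qed

lemma ex_norm_Sop_bound:
  assumes "compact K"
  shows "\<exists>C\<ge>0. \<forall>\<mu>\<in>P2 K. \<forall>u. norm (Sop Phi \<mu> u) \<le> C * norm u"
proof -
  obtain M where M: "M > 0" "\<forall>x\<in>K. norm (DPhi x) \<le> M"
    using ex_norm_DPhi_bound[OF assms] by blast
  have bound: "norm (DPhi x (adjoint (DPhi x) u)) \<le> M\<^sup>2 * norm u" if "x \<in> K" for x u
  proof -
    have "norm (DPhi x (adjoint (DPhi x) u)) \<le> norm (DPhi x) * (norm (DPhi x) * norm u)"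
      by (intro order_trans[OF norm_blinfun] mult_left_mono norm_adjoint_blinfun_le) simp
    also have "\<dots> \<le> M * (M * norm u)"
      using M that by (intro mult_mono) auto
    finally show ?thesis by (simp add: power2_eq_square ac_simps)
  qed
  have "norm (Sop Phi \<mu> u) \<le> M\<^sup>2 * norm u" if "\<mu> \<in> P2 K" for \<mu> u
    unfolding Sop_eq_integral[OF that assms]
    by (rule norm_integral_P2_le[OF that compact_imp_closed[OF assms]
          integrable_P2_continuous[OF that assms continuous_on_DPhi_adjoint_DPhi]]) (use bound in blast)
  then show ?thesis by (intro exI[of _ "M\<^sup>2"]) auto
qed

lemma DPhi_adjoint_DPhi_lipschitz:
  assumes K: "compact K" "convex K"
  shows "\<exists>C>0. \<forall>x\<in>K. \<forall>y\<in>K. \<forall>g.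
           norm (DPhi x (adjoint (DPhi x) g) - DPhi y (adjoint (DPhi y) g)) \<le> C * norm g * norm (x - y)"
proof -
  obtain M1 where M1: "M1 > 0" "\<forall>x\<in>K. norm (DPhi x) \<le> M1"
    using ex_norm_DPhi_bound[OF K(1)] by blast
  obtain M2 where M2: "M2 > 0" "\<forall>x\<in>K. \<forall>y\<in>K. norm (DPhi x - DPhi y) \<le> M2 * norm (x - y)"
    using ex_lipschitz_bound_of_continuous_derivative[OF has_derivative_DPhi continuous_on_D2Phi K]
    by blast
  have "norm (DPhi x (adjoint (DPhi x) g) - DPhi y (adjoint (DPhi y) g))
      \<le> (2 * M1 * M2) * norm g * norm (x - y)" if xy: "x \<in> K" "y \<in> K" for x y g
  proof -
    have "DPhi x (adjoint (DPhi x) g) - DPhi y (adjoint (DPhi y) g)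
        = (DPhi x - DPhi y) (adjoint (DPhi x) g) + DPhi y (adjoint (DPhi x - DPhi y) g)"
      by (simp add: blinfun.diff_left blinfun.diff_right adjoint_blinfun_diff_left[symmetric])
    also have "norm \<dots> \<le> norm (DPhi x - DPhi y) * norm (adjoint (DPhi x) g)
        + norm (DPhi y) * norm (adjoint (DPhi x - DPhi y) g)"
      by (intro order_trans[OF norm_triangle_ineq] add_mono norm_blinfun)
    also have "\<dots> \<le> (M2 * norm (x - y)) * (M1 * norm g) + M1 * ((M2 * norm (x - y)) * norm g)"
    proof (intro add_mono mult_mono)
      show "norm (adjoint (DPhi x) g) \<le> M1 * norm g"
        using norm_adjoint_blinfun_le[of "DPhi x" g] M1(2) xy
        by (meson mult_right_mono norm_ge_zero order_trans)
      show "norm (adjoint (DPhi x - DPhi y) g) \<le> M2 * norm (x - y) * norm g"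
        using norm_adjoint_blinfun_le[of "DPhi x - DPhi y" g] M2(2) xy
        by (meson mult_right_mono norm_ge_zero order_trans)
    qed (use M1 M2 xy in auto)
    finally show ?thesis by (simp add: algebra_simps)
  qed
  moreover have "2 * M1 * M2 > 0" using M1 M2 by simp
  ultimately show ?thesis by blast
qed

lemma Sop_W2_lipschitz:
  assumes K: "compact K" "convex K"
  shows "\<exists>C>0. \<forall>\<mu>\<in>P2 K. \<forall>\<nu>\<in>P2 K. \<forall>g.
           norm (Sop Phi \<mu> g - Sop Phi \<nu> g) \<le> C * norm g * W2 \<mu> \<nu>"
proof -
  obtain C where C: "C > 0" "\<forall>x\<in>K. \<forall>y\<in>K. \<forall>g.
      norm (DPhi x (adjoint (DPhi x) g) - DPhi y (adjoint (DPhi y) g)) \<le> C * norm g * norm (x - y)"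
    using DPhi_adjoint_DPhi_lipschitz[OF K] by blast
  have "norm (Sop Phi \<mu> g - Sop Phi \<nu> g) \<le> C * norm g * W2 \<mu> \<nu>"
    if \<mu>: "\<mu> \<in> P2 K" and \<nu>: "\<nu> \<in> P2 K" for \<mu> \<nu> g
  proof (cases "g = 0")
    case True
    then show ?thesis using Sop_diff[OF \<mu> K(1), of 0 0] Sop_diff[OF \<nu> K(1), of 0 0] by simp
  next
    case False
    then have "0 < C * norm g" using C(1) by simp
    from norm_integral_diff_le_W2[OF \<mu> \<nu> K(1) continuous_on_DPhi_adjoint_DPhi _ this] C(2)
    show ?thesis by (simp add: Sop_eq_integral[OF \<mu> K(1)] Sop_eq_integral[OF \<nu> K(1)])
  qed
  with C(1) show ?thesis by blast
qed

lemma fmp_solves: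
  assumes "\<mu> \<in> P2 K" "compact K" "lam > 0"
  shows "Sop Phi \<mu> (fmp Phi lam \<mu> \<pi>) + lam *\<^sub>R fmp Phi lam \<mu> \<pi> = kme Phi \<mu> - kme Phi \<pi>"
proof -
  obtain C where "C \<ge> 0" "\<forall>u. norm (Sop Phi \<mu> u) \<le> C * norm u"
    using ex_norm_Sop_bound[OF assms(2)] assms(1) by blast
  then have "kme Phi \<mu> - kme Phi \<pi> \<in> range (\<lambda>g. Sop Phi \<mu> g + lam *\<^sub>R g)"
    using ex_solution_monotone_plus_scaleR[OF Sop_diff[OF assms(1,2)] _ inner_Sop_nonneg[OF assms(1,2)]
        assms(3), of C "kme Phi \<mu> - kme Phi \<pi>"]
    by (metis (no_types, lifting) rangeI)
  then show ?thesis unfolding fmp_def by (rule f_inv_into_f)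
qed

lemma ex_norm_fmp_bound:
  assumes "compact K" "lam > 0"
  shows "\<exists>B. \<forall>\<mu>\<in>P2 K. norm (fmp Phi lam \<mu> \<pi>) \<le> B"
proof -
  obtain M where M: "\<forall>\<mu>\<in>P2 K. norm (kme Phi \<mu>) \<le> M"
    using ex_norm_kme_P2_bound[OF assms(1)] by blast
  have "norm (fmp Phi lam \<mu> \<pi>) \<le> (M + norm (kme Phi \<pi>)) / lam" if \<mu>: "\<mu> \<in> P2 K" for \<mu>
  proof -
    have "lam * norm (fmp Phi lam \<mu> \<pi>) \<le> norm (kme Phi \<mu> - kme Phi \<pi>)"
      using scaleR_norm_le_norm_add_scaleR[OF inner_Sop_nonneg[OF \<mu> assms(1)],
          where u = "fmp Phi lam \<mu> \<pi>" and lam = lam] assms(2)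
      by (simp add: fmp_solves[OF \<mu> assms])
    also have "\<dots> \<le> M + norm (kme Phi \<pi>)"
      using norm_triangle_ineq4[of "kme Phi \<mu>" "kme Phi \<pi>"] M \<mu> by fastforce
    finally show ?thesis using assms(2) by (simp add: field_simps)
  qed
  then show ?thesis by blast
qed

lemma fmp_W2_lipschitz:
  assumes K: "compact K" "convex K" and lam: "lam > 0"
  shows "\<exists>L. \<forall>\<mu>\<in>P2 K. \<forall>\<nu>\<in>P2 K. norm (fmp Phi lam \<mu> \<pi> - fmp Phi lam \<nu> \<pi>) \<le> L * W2 \<mu> \<nu>"
proof -
  obtain B where B: "\<forall>\<mu>\<in>P2 K. norm (fmp Phi lam \<mu> \<pi>) \<le> B"
    using ex_norm_fmp_bound[OF K(1) lam] by blast
  obtain Lk where Lk: "\<forall>\<mu>\<in>P2 K. \<forall>\<nu>\<in>P2 K. norm (kme Phi \<mu> - kme Phi \<nu>) \<le> Lk * W2 \<mu> \<nu>"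
    using kme_W2_lipschitz[OF K] by blast
  obtain C where C: "C > 0" "\<forall>\<mu>\<in>P2 K. \<forall>\<nu>\<in>P2 K. \<forall>g. norm (Sop Phi \<mu> g - Sop Phi \<nu> g) \<le> C * norm g * W2 \<mu> \<nu>"
    using Sop_W2_lipschitz[OF K] by blast
  have "norm (fmp Phi lam \<mu> \<pi> - fmp Phi lam \<nu> \<pi>) \<le> ((Lk + C * B) / lam) * W2 \<mu> \<nu>"
    if \<mu>: "\<mu> \<in> P2 K" and \<nu>: "\<nu> \<in> P2 K" for \<mu> \<nu>
  proof -
    define f g where "f = fmp Phi lam \<mu> \<pi>" and "g = fmp Phi lam \<nu> \<pi>"
    have solves: "Sop Phi \<mu> f + lam *\<^sub>R f = kme Phi \<mu> - kme Phi \<pi>"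
      "Sop Phi \<nu> g + lam *\<^sub>R g = kme Phi \<nu> - kme Phi \<pi>"
      unfolding f_def g_def by (rule fmp_solves[OF \<mu> K(1) lam] fmp_solves[OF \<nu> K(1) lam])+
    have "Sop Phi \<mu> (f - g) + lam *\<^sub>R (f - g)
        = (Sop Phi \<mu> f + lam *\<^sub>R f) - (Sop Phi \<nu> g + lam *\<^sub>R g) - (Sop Phi \<mu> g - Sop Phi \<nu> g)"
      unfolding Sop_diff[OF \<mu> K(1)] by (simp add: algebra_simps)
    also have "\<dots> = (kme Phi \<mu> - kme Phi \<nu>) - (Sop Phi \<mu> g - Sop Phi \<nu> g)"
      unfolding solves by simp
    finally have resolvent_diff: "Sop Phi \<mu> (f - g) + lam *\<^sub>R (f - g)
        = (kme Phi \<mu> - kme Phi \<nu>) - (Sop Phi \<mu> g - Sop Phi \<nu> g)" .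
    from resolvent_diff have "lam * norm (f - g) \<le> norm (kme Phi \<mu> - kme Phi \<nu>) + norm (Sop Phi \<mu> g - Sop Phi \<nu> g)"
      using scaleR_norm_le_norm_add_scaleR[OF inner_Sop_nonneg[OF \<mu> K(1)], of lam "f - g"] lam
      by (metis norm_triangle_ineq4 order_trans less_imp_le)
    also have "\<dots> \<le> Lk * W2 \<mu> \<nu> + C * B * W2 \<mu> \<nu>"
    proof (rule add_mono)
      show "norm (Sop Phi \<mu> g - Sop Phi \<nu> g) \<le> C * B * W2 \<mu> \<nu>"
        using C(2) \<mu> \<nu> B W2_nonneg[of \<mu> \<nu>] C(1) unfolding g_def
        by (meson mult_left_mono mult_right_mono order_trans less_imp_le)
    qed (use Lk \<mu> \<nu> in blast)
    finally show ?thesis using lam by (simp add: f_def g_def field_simps)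
  qed
  then show ?thesis by blast
qed

lemma vMMD_lipschitz_and_W2_bounds:
  assumes K: "compact K" "convex K" and pi_int: "integrable \<pi> Phi"
  shows "(\<exists>l>0. \<forall>\<mu>\<in>P2 K. l-lipschitz_on K (vMMD Phi \<pi> \<mu>))
    \<and> (\<exists>L>0. \<forall>\<mu>\<in>P2 K. \<forall>\<nu>\<in>P2 K. \<forall>x\<in>K.
          norm (vMMD Phi \<pi> \<mu> x - vMMD Phi \<pi> \<nu> x) \<le> L * W2 \<mu> \<nu>)"
proof -
  obtain M where M: "\<forall>\<mu>\<in>P2 K. norm (kme Phi \<mu>) \<le> M"
    using ex_norm_kme_P2_bound[OF K(1)] by blast
  have kme_bound: "\<forall>\<mu>\<in>P2 K. norm (kme Phi \<mu> - kme Phi \<pi>) \<le> M + norm (kme Phi \<pi>)"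
    using M norm_triangle_ineq4 by (smt (verit))
  obtain Lk where kme_lip: "\<forall>\<mu>\<in>P2 K. \<forall>\<nu>\<in>P2 K.
      norm ((kme Phi \<mu> - kme Phi \<pi>) - (kme Phi \<nu> - kme Phi \<pi>)) \<le> Lk * W2 \<mu> \<nu>"
    using kme_W2_lipschitz[OF K] by auto
  have "vMMD Phi \<pi> \<mu> = (\<lambda>x. adjoint (DPhi x) (kme Phi \<mu> - kme Phi \<pi>))" if "\<mu> \<in> P2 K" for \<mu>
    by (rule vMMD_eq[OF integrable_Phi_P2[OF that K(1)] pi_int])
  then show ?thesis
    using lipschitz_and_W2_bounds_adjoint_DPhi[OF K kme_bound kme_lip] by simp
qed

lemma grad_fmp_lipschitz_and_W2_bounds:
  assumes K: "compact K" "convex K" and lam: "lam > 0"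
  shows "(\<exists>l>0. \<forall>\<mu>\<in>P2 K. l-lipschitz_on K (grad (ev Phi (fmp Phi lam \<mu> \<pi>))))
    \<and> (\<exists>L>0. \<forall>\<mu>\<in>P2 K. \<forall>\<nu>\<in>P2 K. \<forall>x\<in>K.
          norm (grad (ev Phi (fmp Phi lam \<mu> \<pi>)) x - grad (ev Phi (fmp Phi lam \<nu> \<pi>)) x)
            \<le> L * W2 \<mu> \<nu>)"
proof -
  obtain B where fmp_bound: "\<forall>\<mu>\<in>P2 K. norm (fmp Phi lam \<mu> \<pi>) \<le> B"
    using ex_norm_fmp_bound[OF K(1) lam] by blast
  obtain Lf where fmp_lip: "\<forall>\<mu>\<in>P2 K. \<forall>\<nu>\<in>P2 K.
      norm (fmp Phi lam \<mu> \<pi> - fmp Phi lam \<nu> \<pi>) \<le> Lf * W2 \<mu> \<nu>"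
    using fmp_W2_lipschitz[OF K lam] by blast
  show ?thesis
    using lipschitz_and_W2_bounds_adjoint_DPhi[OF K fmp_bound fmp_lip] by (simp add: grad_ev_eq)
qed

end

theorem lemma9:
  fixes Phi :: "'a::euclidean_space \<Rightarrow> 'h::{real_inner,banach,second_countable_topology}"
    and DPhi :: "'a \<Rightarrow> ('a \<Rightarrow>\<^sub>L 'h)"
    and D2Phi :: "'a \<Rightarrow> ('a \<Rightarrow>\<^sub>L ('a \<Rightarrow>\<^sub>L 'h))"
    and \<pi> :: "'a measure" and R lam :: real
  assumes dense: "closure (span (range Phi)) = UNIV"
    and D1: "\<And>x. (Phi has_derivative blinfun_apply (DPhi x)) (at x)"
    and D2: "\<And>x. (DPhi has_derivative blinfun_apply (D2Phi x)) (at x)"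
    and D2cont: "continuous_on UNIV D2Phi"
    and bound: "\<forall>r>0. \<exists>B. \<forall>x. norm x \<le> r \<longrightarrow>
                  (\<forall>i\<in>Basis. \<forall>j\<in>Basis. norm (D2Phi x i j) \<le> B)"
    and R: "R > 0"
    and pi: "\<pi> \<in> P2 UNIV"
    and pi_int: "integrable \<pi> Phi"
    and lam: "lam > 0"
  shows "(\<exists>l>0. \<forall>\<mu>\<in>P2 (cball 0 R). l-lipschitz_on (cball 0 R) (vMMD Phi \<pi> \<mu>))
       \<and> (\<exists>L>0. \<forall>\<mu>\<in>P2 (cball 0 R). \<forall>\<nu>\<in>P2 (cball 0 R). \<forall>x\<in>cball 0 R.
              norm (vMMD Phi \<pi> \<mu> x - vMMD Phi \<pi> \<nu> x) \<le> L * W2 \<mu> \<nu>)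
       \<and> (\<exists>l>0. \<forall>\<mu>\<in>P2 (cball 0 R).
              l-lipschitz_on (cball 0 R) (grad (ev Phi (fmp Phi lam \<mu> \<pi>))))
       \<and> (\<exists>L>0. \<forall>\<mu>\<in>P2 (cball 0 R). \<forall>\<nu>\<in>P2 (cball 0 R). \<forall>x\<in>cball 0 R.
              norm (grad (ev Phi (fmp Phi lam \<mu> \<pi>)) x - grad (ev Phi (fmp Phi lam \<nu> \<pi>)) x)
                \<le> L * W2 \<mu> \<nu>)"
proof -
  interpret C2_feature_map Phi DPhi D2Phi
    using D1 D2 D2cont by unfold_locales
  have K: "compact (cball (0::'a) R)" "convex (cball (0::'a) R)" by simp_all
  show ?thesis
    using vMMD_lipschitz_and_W2_bounds[OF K pi_int] grad_fmp_lipschitz_and_W2_bounds[OF K lam]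
    by blast
qed

end
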